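(* Let $q$ be a prime power and $n$ a positive integer with $\gcd(q,n)=1$; write $v=\nu_2(n)$ and $n=2^vn'$ with $n'$ odd. Let $s\in\mathbb{Z}_n^*$ and $t\in\mathbb{Z}_n$ with $qt\equiv t\pmod n$. Then Type-I duadic splittings of $\mathbb{Z}_n$ given by $\rho_{s,t}$ exist if and only if Type-I duadic splittings of $\mathbb{Z}_{2^v}$ given by $\rho_{s,t}$ (with $s,t$ reduced modulo $2^v$) exist.
   Context: For a modulus $m$ coprime to $q$, with $s$ coprime to $m$ and $qt\equiv t\pmod m$: $\mu_q:\mathbb{Z}_m\to\mathbb{Z}_m$, $i\mapsto qi\bmod m$; $P\subseteq\mathbb{Z}_m$ is $\mu_q$-invariant if $\mu_q(P)=P$; $\rho_{s,t}:\mathbb{Z}_m\to\mathbb{Z}_m$, $i\mapsto s(i+t)\bmod m$. Type-I duadic splittings of $\mathbb{Z}_m$ given by $\rho_{s,t}$ exist if there is a $\mu_q$-invariant $P\subseteq\mathbb{Z}_m$ with $\mathbb{Z}_m=P\cup\rho_{s,t}(P)$ a disjoint union. $\nu_2$ is the $2$-adic valuation. *)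

theory Defs
  imports "HOL-Computational_Algebra.Primes"
begin

text \<open>Z_m is represented by the residues {0..<m} (natural numbers).\<close>

definition mu :: "nat \<Rightarrow> nat \<Rightarrow> nat \<Rightarrow> nat" where
  "mu q m i = (q * i) mod m"

definition mu_invariant :: "nat \<Rightarrow> nat \<Rightarrow> nat set \<Rightarrow> bool" where
  "mu_invariant q m P \<longleftrightarrow> mu q m ` P = P"

definition rho :: "nat \<Rightarrow> nat \<Rightarrow> nat \<Rightarrow> nat \<Rightarrow> nat" where
  "rho s t m i = (s * (i + t)) mod m"

definition typeI_duadic_exists :: "nat \<Rightarrow> nat \<Rightarrow> nat \<Rightarrow> nat \<Rightarrow> bool" where
  "typeI_duadic_exists q m s t \<longleftrightarrow>
     (\<exists>P. P \<subseteq> {..<m} \<and> mu_invariant q m P \<and>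
          {..<m} = P \<union> rho s t m ` P \<and> P \<inter> rho s t m ` P = {})"

definition prime_power :: "nat \<Rightarrow> bool" where
  "prime_power q \<longleftrightarrow> (\<exists>p k. prime p \<and> k \<ge> 1 \<and> q = p ^ k)"

end

theory Submission
  imports Defs "HOL-Library.FuncSet" "HOL-Number_Theory.Cong" "HOL-Combinatorics.Cycles"
begin

text \<open>
  \<open>\<mu>\<^sub>q\<close> and \<open>\<rho>\<^sub>s\<^sub>,\<^sub>t\<close> are commuting permutations of \<open>\<int>\<^sub>m\<close>, and a splitting
  \<open>\<int>\<^sub>m = P \<union> \<rho>(P)\<close> with \<open>P\<close> \<open>\<mu>\<^sub>q\<close>-invariant exists iff no point is returned to itself
  by some \<open>\<mu>\<^sup>a \<rho>\<^sup>b\<close> with \<open>b\<close> odd: a splitting is then obtained by choosing a base point in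
  every orbit of the group generated by \<open>\<mu>\<close> and \<open>\<rho>\<close> and collecting the points reached with an
  even power of \<open>\<rho>\<close>.

  Write \<open>n = 2\<^sup>v m\<close> with \<open>m\<close> odd. An odd return modulo \<open>n\<close> reduces to one modulo \<open>2\<^sup>v\<close>.
  Conversely, if \<open>\<mu>\<^sup>a \<rho>\<^sup>b\<close> fixes \<open>x\<close> modulo \<open>2\<^sup>v\<close>, then, as it permutes the odd-size set
  \<open>\<int>\<^sub>m\<close>, it has a cycle of odd length \<open>k\<close> through some \<open>c\<close>; the Chinese remainder lift of
  \<open>(x, c)\<close> is then fixed by \<open>\<mu>\<^sup>a\<^sup>k \<rho>\<^sup>b\<^sup>k\<close>, and \<open>bk\<close> is odd.
\<close>

lemma finite_bij_betw_funpow_period: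
  assumes "finite A" and "bij_betw f A A"
  obtains k where "k > 0" and "\<And>x. x \<in> A \<Longrightarrow> (f ^^ k) x = x"
proof -
  define \<phi> where "\<phi> i = restrict (f ^^ i) A" for i
  have "\<phi> i \<in> A \<rightarrow>\<^sub>E A" for i
    unfolding \<phi>_def using bij_betw_apply[OF bij_betw_funpow[OF assms(2)]] by simp
  then have "range \<phi> \<subseteq> A \<rightarrow>\<^sub>E A"
    by blast
  moreover have "finite (A \<rightarrow>\<^sub>E A)"
    using assms(1) by (simp add: finite_PiE)
  ultimately have "finite (range \<phi>)"
    by (rule finite_subset)
  then have "\<not> inj \<phi>"
    using finite_imageD by auto
  then obtain i j where "i \<noteq> j" and "\<phi> i = \<phi> j"
    unfolding inj_def by blast
  then obtain i j where "i < j" and \<phi>: "\<phi> i = \<phi> j"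
    by (metis linorder_neqE_nat)
  show thesis
  proof (rule that[of "j - i"])
    show "j - i > 0" using \<open>i < j\<close> by simp
    fix x assume x: "x \<in> A"
    have "(f ^^ i) ((f ^^ (j - i)) x) = (f ^^ (i + (j - i))) x"
      by (simp add: funpow_add)
    also have "\<dots> = (f ^^ j) x"
      using \<open>i < j\<close> by simp
    also have "\<dots> = (f ^^ i) x"
      using fun_cong[OF \<phi>, of x] x by (simp add: \<phi>_def)
    finally show "(f ^^ (j - i)) x = x"
      using bij_betw_imp_inj_on[OF bij_betw_funpow[OF assms(2)]] x
        bij_betw_apply[OF bij_betw_funpow[OF assms(2)] x]
      by (meson inj_onD)
  qed
qed

lemma card_range_funpow:
  assumes "(h ^^ n) c = c" and "n > 0"
  shows "card (range (\<lambda>i. (h ^^ i) c)) = least_power h c"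
proof -
  let ?p = "least_power h c"
  have p: "(h ^^ ?p) c = c" "?p > 0"
    using least_powerI[OF assms] by auto
  have "(h ^^ i) c \<in> (\<lambda>i. (h ^^ i) c) ` {0..<?p}" for i
    using funpow_mod_eq[OF p(1), of i] p(2)
    by (metis atLeastLessThan_iff image_eqI mod_less_divisor zero_le)
  then have "range (\<lambda>i. (h ^^ i) c) = (\<lambda>i. (h ^^ i) c) ` {0..<?p}"
    by auto
  moreover have "inj_on (\<lambda>i. (h ^^ i) c) {0..<?p}"
    using p(1) least_power_le[where f = h and x = c] by (intro inj_on_funpow_least) force+
  ultimately show ?thesis
    by (simp add: card_image)
qed

lemma bij_betw_odd_card_odd_period:
  assumes "finite A" and "odd (card A)" and "bij_betw h A A"
  shows "\<exists>c\<in>A. \<exists>k. odd k \<and> (h ^^ k) c = c"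
  using assms
proof (induction "card A" arbitrary: A rule: less_induct)
  case less
  obtain c where c: "c \<in> A"
    using less.prems(2) by fastforce
  obtain j where j: "j > 0" "(h ^^ j) c = c"
    using finite_bij_betw_funpow_period[OF less.prems(1,3)] c by metis
  show ?case
  proof (cases "odd (least_power h c)")
    case True
    then show ?thesis
      using least_powerI[OF j(2,1)] c by blast
  next
    case False
    define Orb where "Orb = range (\<lambda>i. (h ^^ i) c)"
    have "Orb \<subseteq> A"
      using bij_betw_apply[OF bij_betw_funpow[OF less.prems(3)] c] by (auto simp: Orb_def)
    have "h ((h ^^ i) c) \<in> Orb" for i
      unfolding Orb_def by (metis comp_apply funpow.simps(2) rangeI)
    then have "h ` Orb \<subseteq> Orb"
      by (auto simp: Orb_def)
    then have "bij_betw h Orb Orb"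
      using \<open>Orb \<subseteq> A\<close> less.prems(1) bij_betw_imp_inj_on[OF less.prems(3)]
      by (metis bij_betw_def endo_inj_surj finite_subset inj_on_subset)
    then have "bij_betw h (A - Orb) (A - Orb)"
      using bij_betw_DiffI[OF less.prems(3)] \<open>Orb \<subseteq> A\<close> by blast
    have "card Orb = least_power h c"
      using card_range_funpow[OF j(2,1)] by (simp add: Orb_def)
    moreover have "card Orb \<le> card A"
      using card_mono[OF less.prems(1) \<open>Orb \<subseteq> A\<close>] .
    moreover have "card Orb > 0"
      using card_range_funpow[OF j(2,1)] least_powerI[OF j(2,1)] by (simp add: Orb_def)
    moreover have "card (A - Orb) = card A - card Orb"
      using card_Diff_subset[OF finite_subset[OF \<open>Orb \<subseteq> A\<close> less.prems(1)] \<open>Orb \<subseteq> A\<close>] .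
    ultimately have "card (A - Orb) < card A \<and> odd (card (A - Orb))"
      using False less.prems(2) by simp
    then have "\<exists>c\<in>A - Orb. \<exists>k. odd k \<and> (h ^^ k) c = c"
      using \<open>bij_betw h (A - Orb) (A - Orb)\<close> less.prems(1) by (intro less.hyps) simp_all
    then show ?thesis
      using DiffD1 by fast
  qed
qed

definition bipow :: "('a \<Rightarrow> 'a) \<Rightarrow> ('a \<Rightarrow> 'a) \<Rightarrow> nat \<Rightarrow> nat \<Rightarrow> 'a \<Rightarrow> 'a" where
  "bipow f g a b = f ^^ a \<circ> g ^^ b"

definition odd_return :: "('a \<Rightarrow> 'a) \<Rightarrow> ('a \<Rightarrow> 'a) \<Rightarrow> 'a set \<Rightarrow> bool" where
  "odd_return f g A \<longleftrightarrow> (\<exists>x\<in>A. \<exists>a b. odd b \<and> bipow f g a b x = x)"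

definition duadic_splitting :: "('a \<Rightarrow> 'a) \<Rightarrow> ('a \<Rightarrow> 'a) \<Rightarrow> 'a set \<Rightarrow> 'a set \<Rightarrow> bool" where
  "duadic_splitting f g A P \<longleftrightarrow> P \<subseteq> A \<and> f ` P = P \<and> A = P \<union> g ` P \<and> P \<inter> g ` P = {}"

lemma funpow_commute_funpow:
  assumes "\<And>x. f (g x) = g (f x)"
  shows "(f ^^ a) ((g ^^ b) x) = (g ^^ b) ((f ^^ a) x)"
proof -
  have "f ((g ^^ b) y) = (g ^^ b) (f y)" for y
    by (induction b) (simp_all add: assms)
  then show ?thesis
    by (induction a) simp_all
qed

lemma bipow_bipow:
  assumes "\<And>x. f (g x) = g (f x)"
  shows "bipow f g a b (bipow f g c d x) = bipow f g (a + c) (b + d) x"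
  by (simp add: bipow_def funpow_add funpow_commute_funpow[of f g, OF assms])

lemma funpow_bipow:
  assumes "\<And>x. f (g x) = g (f x)"
  shows "(bipow f g a b ^^ k) x = bipow f g (a * k) (b * k) x"
  by (induction k) (simp_all add: bipow_bipow[of f g, OF assms] add.commute, simp add: bipow_def)

lemma funpow_semiconj:
  assumes "\<And>z. \<pi> (F z) = F' (\<pi> z)"
  shows "\<pi> ((F ^^ k) z) = (F' ^^ k) (\<pi> z)"
  by (induction k) (simp_all add: assms)

locale commuting_bijections =
  fixes A :: "'a set" and f g :: "'a \<Rightarrow> 'a"
  assumes finite_A: "finite A"
    and bij_f: "bij_betw f A A" and bij_g: "bij_betw g A A"
    and commute: "\<And>x. f (g x) = g (f x)"
begin

lemma bij_betw_bipow: "bij_betw (bipow f g a b) A A"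
  unfolding bipow_def by (rule bij_betw_trans[OF bij_betw_funpow[OF bij_g] bij_betw_funpow[OF bij_f]])

lemma bipow_in: "x \<in> A \<Longrightarrow> bipow f g a b x \<in> A"
  using bij_betw_apply[OF bij_betw_bipow] .

lemma bipow_bipow': "bipow f g a b (bipow f g c d x) = bipow f g (a + c) (b + d) x"
  using bipow_bipow[of f g, OF commute] .

lemma common_period:
  "\<exists>N > 0. \<forall>a b. \<forall>x\<in>A. bipow f g (a * N) (b * N) x = x"
proof -
  obtain k l where "k > 0" "l > 0"
    and k: "\<And>x. x \<in> A \<Longrightarrow> (f ^^ k) x = x" and l: "\<And>x. x \<in> A \<Longrightarrow> (g ^^ l) x = x"
    using finite_bij_betw_funpow_period[OF finite_A] bij_f bij_g by metis
  have "bipow f g (a * (k * l)) (b * (k * l)) x = x" if "x \<in> A" for a b x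
  proof -
    have "(g ^^ (b * (k * l))) x = x"
      using funpow_mod_eq[OF l[OF that], of "b * (k * l)"] by simp
    moreover have "(f ^^ (a * (k * l))) x = x"
      using funpow_mod_eq[OF k[OF that], of "a * (k * l)"] by simp
    ultimately show ?thesis
      by (simp add: bipow_def)
  qed
  then show ?thesis
    using \<open>k > 0\<close> \<open>l > 0\<close> by (metis nat_0_less_mult_iff)
qed

definition period :: nat where
  "period = (SOME N. N > 0 \<and> (\<forall>a b. \<forall>x\<in>A. bipow f g (a * N) (b * N) x = x))"

lemma period_pos: "period > 0"
  and bipow_period: "x \<in> A \<Longrightarrow> bipow f g (a * period) (b * period) x = x"
  using someI_ex[OF common_period] by (simp_all add: period_def)

lemma bipow_inverse:
  assumes "x \<in> A"
  shows "bipow f g (a * (period - 1)) (b * (period - 1)) (bipow f g a b x) = x"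
proof -
  have "a * (period - 1) + a = a * period" "b * (period - 1) + b = b * period"
    using period_pos by (simp_all add: algebra_simps)
  then show ?thesis
    using bipow_period[OF assms] by (simp add: bipow_bipow')
qed

definition orbit :: "'a \<Rightarrow> 'a set" where
  "orbit x = {bipow f g a b x | a b. True}"

lemma orbit_eq:
  assumes "x \<in> A" and "y \<in> orbit x"
  shows "orbit y = orbit x"
proof -
  obtain a b where y: "y = bipow f g a b x"
    using assms(2) by (auto simp: orbit_def)
  have "bipow f g c d y \<in> orbit x" for c d
    unfolding y bipow_bipow' orbit_def by blast
  moreover have "bipow f g c d x \<in> orbit y" for c d
    using bipow_inverse[OF assms(1), of a b] unfolding orbit_def y
    by (metis (mono_tags, lifting) bipow_bipow' mem_Collect_eq)
  ultimately show ?thesis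
    by (auto simp: orbit_def)
qed

definition base :: "'a \<Rightarrow> 'a" where
  "base x = (SOME y. y \<in> orbit x)"

lemma self_in_orbit: "x \<in> orbit x"
proof -
  have "x = bipow f g 0 0 x"
    by (simp add: bipow_def)
  then show ?thesis
    unfolding orbit_def by blast
qed

lemma base_in_orbit: "base x \<in> orbit x"
  unfolding base_def using self_in_orbit by (rule someI)

lemma base_in: "x \<in> A \<Longrightarrow> base x \<in> A"
  using base_in_orbit[of x] bipow_in by (auto simp: orbit_def)

lemma base_eq: "x \<in> A \<Longrightarrow> y \<in> orbit x \<Longrightarrow> base y = base x"
  by (simp add: base_def orbit_eq)

lemma obtain_bipow_base:
  assumes "x \<in> A"
  obtains a b where "bipow f g a b (base x) = x"
proof -
  have "x \<in> orbit (base x)"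
    using orbit_eq[OF assms base_in_orbit] self_in_orbit by simp
  then obtain a b where "x = bipow f g a b (base x)"
    unfolding orbit_def by blast
  then show thesis
    using that by metis
qed

lemma no_odd_return_parity:
  assumes "\<not> odd_return f g A" and "x \<in> A" and "bipow f g a b x = bipow f g c d x"
  shows "even (b + d)"
proof -
  have "even period"
    using assms(1,2) bipow_period[OF assms(2), of 0 1] by (auto simp: odd_return_def)
  have "bipow f g (c * (period - 1)) (d * (period - 1)) (bipow f g a b x) = x"
    using bipow_inverse[OF assms(2), of c d] assms(3) by simp
  then have "bipow f g (c * (period - 1) + a) (d * (period - 1) + b) x = x"
    by (simp add: bipow_bipow')
  then have "even (d * (period - 1) + b)"
    using assms(1,2) unfolding odd_return_def by blast
  moreover have "odd (period - 1)"
    using \<open>even period\<close> period_pos by (cases period) simp_all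
  ultimately show ?thesis
    by simp
qed

definition even_half :: "'a set" where
  "even_half = {x \<in> A. \<exists>a b. even b \<and> bipow f g a b (base x) = x}"

lemma mem_even_half_iff:
  assumes "\<not> odd_return f g A" and "x \<in> A" and "bipow f g a b (base x) = x"
  shows "x \<in> even_half \<longleftrightarrow> even b"
proof
  assume "x \<in> even_half"
  then obtain a' b' where "even b'" and "bipow f g a' b' (base x) = bipow f g a b (base x)"
    using assms(3) by (auto simp: even_half_def)
  then show "even b"
    using no_odd_return_parity[OF assms(1) base_in[OF assms(2)], of a' b' a b] by simp
next
  assume "even b"
  then show "x \<in> even_half"
    using assms(2,3) by (auto simp: even_half_def)
qed

lemma bipow_mem_even_half_iff:
  assumes "\<not> odd_return f g A" and "x \<in> A"
  shows "bipow f g c d x \<in> even_half \<longleftrightarrow> (x \<in> even_half \<longleftrightarrow> even d)"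
proof -
  obtain a b where x: "bipow f g a b (base x) = x"
    using obtain_bipow_base[OF assms(2)] .
  let ?y = "bipow f g c d x"
  have "base ?y = base x"
    using base_eq[OF assms(2)] by (auto simp: orbit_def)
  then have "bipow f g (c + a) (d + b) (base ?y) = ?y"
    using x bipow_bipow'[of c d a b "base x"] by simp
  then show ?thesis
    using mem_even_half_iff[OF assms(1) bipow_in[OF assms(2)]] mem_even_half_iff[OF assms x]
    by auto
qed

lemma no_odd_return_imp_splitting:
  assumes "\<not> odd_return f g A"
  shows "duadic_splitting f g A even_half"
proof -
  have f_iff: "f x \<in> even_half \<longleftrightarrow> x \<in> even_half" and g_iff: "g x \<in> even_half \<longleftrightarrow> x \<notin> even_half"
    if "x \<in> A" for x
    using bipow_mem_even_half_iff[OF assms that, of 1 0] bipow_mem_even_half_iff[OF assms that, of 0 1]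
    by (simp_all add: bipow_def)
  have sub: "even_half \<subseteq> A"
    by (auto simp: even_half_def)
  have "f ` even_half = even_half"
    using sub f_iff bij_betw_imp_inj_on[OF bij_f] finite_subset[OF sub finite_A]
    by (intro endo_inj_surj) (auto intro: inj_on_subset)
  moreover have "A \<subseteq> even_half \<union> g ` even_half"
  proof
    fix x assume x: "x \<in> A"
    let ?y = "bipow f g 0 (period - 1) x"
    have "g ?y = x"
      using bipow_bipow'[of 0 1 0 "period - 1" x] bipow_period[OF x, of 0 1] period_pos
      by (simp add: bipow_def)
    show "x \<in> even_half \<union> g ` even_half"
    proof (cases "?y \<in> even_half")
      case True
      then have "g ?y \<in> g ` even_half"
        by (rule imageI)
      then show ?thesis
        using \<open>g ?y = x\<close> by simp
    next
      case False
      then have "g ?y \<in> even_half"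
        using g_iff[OF bipow_in[OF x, of 0 "period - 1"]] by blast
      then show ?thesis
        using \<open>g ?y = x\<close> by simp
    qed
  qed
  moreover have "g ` even_half \<subseteq> A"
    using sub bij_betw_apply[OF bij_g] by auto
  ultimately show ?thesis
    using sub g_iff by (auto simp: duadic_splitting_def)
qed

lemma splitting_imp_no_odd_return:
  assumes "duadic_splitting f g A P"
  shows "\<not> odd_return f g A"
proof -
  have P: "P \<subseteq> A" "f ` P = P" "A = P \<union> g ` P" "P \<inter> g ` P = {}"
    using assms by (simp_all add: duadic_splitting_def)
  have f_iff: "f y \<in> P \<longleftrightarrow> y \<in> P" if "y \<in> A" for y
    using inj_on_image_mem_iff[OF bij_betw_imp_inj_on[OF bij_f] that P(1)] P(2) by simp
  have g_iff: "g y \<in> P \<longleftrightarrow> y \<notin> P" if "y \<in> A" for y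
  proof -
    have "g y \<in> P \<union> g ` P"
      using P(3) bij_betw_apply[OF bij_g that] by blast
    then show ?thesis
      using inj_on_image_mem_iff[OF bij_betw_imp_inj_on[OF bij_g] that P(1)] P(4) by blast
  qed
  have "(g ^^ b) y \<in> P \<longleftrightarrow> (y \<in> P \<longleftrightarrow> even b)" if "y \<in> A" for y b
    using that by (induction b) (auto simp: g_iff bij_betw_apply[OF bij_betw_funpow[OF bij_g]])
  moreover have "(f ^^ a) y \<in> P \<longleftrightarrow> y \<in> P" if "y \<in> A" for y a
    using that by (induction a) (auto simp: f_iff bij_betw_apply[OF bij_betw_funpow[OF bij_f]])
  ultimately have bipow_iff: "bipow f g a b y \<in> P \<longleftrightarrow> (y \<in> P \<longleftrightarrow> even b)" if "y \<in> A" for y a b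
    using that bij_betw_apply[OF bij_betw_funpow[OF bij_g]] by (simp add: bipow_def)
  show ?thesis
  proof
    assume "odd_return f g A"
    then obtain x a b where "x \<in> A" and "odd b" and "bipow f g a b x = x"
      by (auto simp: odd_return_def)
    then show False
      using bipow_iff[of x a b] by simp
  qed
qed

theorem splitting_exists_iff_no_odd_return:
  "(\<exists>P. duadic_splitting f g A P) \<longleftrightarrow> \<not> odd_return f g A"
  using splitting_imp_no_odd_return no_odd_return_imp_splitting by blast

end

lemma bij_betw_mu:
  assumes "coprime q m"
  shows "bij_betw (mu q m) {..<m} {..<m}"
proof -
  have "inj_on (mu q m) {..<m}"
  proof (rule inj_onI)
    fix x y assume "x \<in> {..<m}" and "y \<in> {..<m}" and "mu q m x = mu q m y"
    then have "[q * x = q * y] (mod m)"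
      by (simp add: mu_def cong_def)
    then show "x = y"
      using cong_mult_lcancel_nat[OF assms] \<open>x \<in> {..<m}\<close> \<open>y \<in> {..<m}\<close> by (simp add: cong_def)
  qed
  moreover have "mu q m ` {..<m} \<subseteq> {..<m}"
    by (auto simp: mu_def)
  ultimately show ?thesis
    unfolding bij_betw_def using endo_inj_surj[OF finite_lessThan] by simp
qed

lemma bij_betw_rho:
  assumes "coprime s m"
  shows "bij_betw (rho s t m) {..<m} {..<m}"
proof -
  have "inj_on (rho s t m) {..<m}"
  proof (rule inj_onI)
    fix x y assume "x \<in> {..<m}" and "y \<in> {..<m}" and "rho s t m x = rho s t m y"
    then have "[s * (x + t) = s * (y + t)] (mod m)"
      by (simp add: rho_def cong_def)
    then have "[x = y] (mod m)"
      using cong_mult_lcancel_nat[OF assms] cong_add_rcancel_nat by simp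
    then show "x = y"
      using \<open>x \<in> {..<m}\<close> \<open>y \<in> {..<m}\<close> by (simp add: cong_def)
  qed
  moreover have "rho s t m ` {..<m} \<subseteq> {..<m}"
    by (auto simp: rho_def)
  ultimately show ?thesis
    unfolding bij_betw_def using endo_inj_surj[OF finite_lessThan] by simp
qed

lemma mu_rho_commute:
  assumes "(q * t) mod m = t mod m"
  shows "mu q m (rho s t m x) = rho s t m (mu q m x)"
proof -
  have "[q * (s * (x + t)) = s * (q * x) + s * (q * t)] (mod m)"
    by (simp add: algebra_simps)
  also have "[s * (q * x) + s * (q * t) = s * (q * x) + s * t] (mod m)"
    using assms by (intro cong_add cong_mult cong_refl) (simp add: cong_def)
  also have "s * (q * x) + s * t = s * (q * x + t)"
    by (simp add: algebra_simps)
  also have "[s * (q * x + t) = s * (q * x mod m + t)] (mod m)"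
    by (intro cong_mult cong_add cong_refl) (simp add: cong_def)
  finally show ?thesis
    by (simp add: mu_def rho_def cong_def mod_mult_right_eq)
qed

lemma commuting_bijections_mu_rho:
  assumes "d dvd n" and "coprime q n" and "coprime s n" and "(q * t) mod n = t mod n"
  shows "commuting_bijections {..<d} (mu q d) (rho s t d)"
proof
  show "bij_betw (mu q d) {..<d} {..<d}" and "bij_betw (rho s t d) {..<d} {..<d}"
    using assms(1-3) by (auto intro!: bij_betw_mu bij_betw_rho elim: coprime_imp_coprime)
  show "mu q d (rho s t d x) = rho s t d (mu q d x)" for x
    using assms(1,4) by (intro mu_rho_commute) (metis mod_mod_cancel)
qed simp

lemma typeI_duadic_exists_iff_no_odd_return:
  assumes "commuting_bijections {..<m} (mu q m) (rho s t m)"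
  shows "typeI_duadic_exists q m s t \<longleftrightarrow> \<not> odd_return (mu q m) (rho s t m) {..<m}"
  using commuting_bijections.splitting_exists_iff_no_odd_return[OF assms]
  by (simp add: typeI_duadic_exists_def duadic_splitting_def mu_invariant_def)

lemma rho_mod_params: "rho (s mod d) (t mod d) d = rho s t d"
proof
  fix x
  have "[s mod d * (x + t mod d) = s * (x + t)] (mod d)"
    by (intro cong_mult cong_add cong_refl) (simp_all add: cong_def)
  then show "rho (s mod d) (t mod d) d x = rho s t d x"
    by (simp add: rho_def cong_def)
qed

lemma bipow_mu_rho_mod:
  assumes "d dvd m"
  shows "bipow (mu q m) (rho s t m) a b z mod d = bipow (mu q d) (rho s t d) a b (z mod d)"
proof -
  have "mu q m x mod d = mu q d (x mod d)" for x
    using assms by (simp add: mu_def mod_mod_cancel mod_mult_right_eq)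
  moreover have "rho s t m x mod d = rho s t d (x mod d)" for x
  proof -
    have "[s * (x mod d + t) = s * (x + t)] (mod d)"
      by (intro cong_mult cong_add cong_refl) (simp add: cong_def)
    then show ?thesis
      using assms by (simp add: rho_def cong_def mod_mod_cancel)
  qed
  ultimately show ?thesis
    by (simp add: bipow_def funpow_semiconj[where \<pi> = "\<lambda>z. z mod d"])
qed

lemma odd_return_mod_odd_cofactor:
  assumes "coprime w m" and "odd m"
    and "coprime q (w * m)" and "coprime s (w * m)" and "(q * t) mod (w * m) = t mod (w * m)"
  shows "odd_return (mu q (w * m)) (rho s t (w * m)) {..<w * m} \<longleftrightarrow>
         odd_return (mu q w) (rho s t w) {..<w}"
    (is "odd_return ?\<mu> ?\<rho> _ \<longleftrightarrow> _")
proof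
  assume "odd_return ?\<mu> ?\<rho> {..<w * m}"
  then obtain x a b where "x < w * m" and "odd b" and "bipow ?\<mu> ?\<rho> a b x = x"
    by (auto simp: odd_return_def)
  moreover have "x mod w < w"
    using \<open>x < w * m\<close> by (cases "w = 0") simp_all
  moreover have "bipow (mu q w) (rho s t w) a b (x mod w) = x mod w"
    using bipow_mu_rho_mod[of w "w * m" q s t a b x] \<open>bipow ?\<mu> ?\<rho> a b x = x\<close> by simp
  ultimately show "odd_return (mu q w) (rho s t w) {..<w}"
    unfolding odd_return_def by blast
next
  assume "odd_return (mu q w) (rho s t w) {..<w}"
  then obtain x a b where "x < w" and "odd b" and fix_w: "bipow (mu q w) (rho s t w) a b x = x"
    by (auto simp: odd_return_def)
  interpret N: commuting_bijections "{..<w * m}" ?\<mu> ?\<rho>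
    using commuting_bijections_mu_rho[OF dvd_refl assms(3-5)] .
  interpret M: commuting_bijections "{..<m}" "mu q m" "rho s t m"
    using commuting_bijections_mu_rho[OF _ assms(3-5)] by simp
  obtain c k where "c < m" and "odd k" and fix_m: "(bipow (mu q m) (rho s t m) a b ^^ k) c = c"
    using bij_betw_odd_card_odd_period[OF _ _ M.bij_betw_bipow[of a b]] \<open>odd m\<close> by auto
  obtain z where "[z = x] (mod w)" and "[z = c] (mod m)"
    using binary_chinese_remainder_nat[OF assms(1)] by blast
  define y where "y = z mod (w * m)"
  have "y < w * m"
    using \<open>c < m\<close> \<open>x < w\<close> by (simp add: y_def)
  let ?H = "bipow ?\<mu> ?\<rho> a b"
  have reduce: "(?H ^^ k) y mod d = (bipow (mu q d) (rho s t d) a b ^^ k) (y mod d)"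
    if "d dvd w * m" for d
    by (rule funpow_semiconj[where \<pi> = "\<lambda>z. z mod d"]) (rule bipow_mu_rho_mod[OF that])
  have "(bipow (mu q w) (rho s t w) a b ^^ k) x = x"
    using fix_w by (induction k) simp_all
  then have "[(?H ^^ k) y = y] (mod w)"
    using reduce[of w] \<open>[z = x] (mod w)\<close> \<open>x < w\<close>
    by (simp add: cong_def y_def mod_mod_cancel)
  moreover have "[(?H ^^ k) y = y] (mod m)"
    using reduce[of m] fix_m \<open>[z = c] (mod m)\<close> \<open>c < m\<close>
    by (simp add: cong_def y_def mod_mod_cancel)
  ultimately have "[(?H ^^ k) y = y] (mod w * m)"
    using coprime_cong_mult_nat[OF _ _ assms(1)] by blast
  moreover have "(?H ^^ k) y = bipow ?\<mu> ?\<rho> (a * k) (b * k) y"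
    using funpow_bipow[of ?\<mu> ?\<rho>, OF N.commute] .
  moreover have "bipow ?\<mu> ?\<rho> (a * k) (b * k) y < w * m"
    using N.bipow_in \<open>y < w * m\<close> by simp
  ultimately have "bipow ?\<mu> ?\<rho> (a * k) (b * k) y = y"
    using \<open>y < w * m\<close> by (simp add: cong_def)
  moreover have "odd (b * k)"
    using \<open>odd b\<close> \<open>odd k\<close> by simp
  ultimately show "odd_return ?\<mu> ?\<rho> {..<w * m}"
    using \<open>y < w * m\<close> unfolding odd_return_def by blast
qed

theorem lemma3p9:
  fixes q n s t :: nat
  assumes "prime_power q" and "n > 0" and "coprime q n"
    and "s < n" and "coprime s n" and "t < n"
    and "(q * t) mod n = t mod n"
  shows "typeI_duadic_exists q n s t \<longleftrightarrow>
         typeI_duadic_exists q (2 ^ multiplicity 2 n) (s mod 2 ^ multiplicity 2 n)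
                                 (t mod 2 ^ multiplicity 2 n)"
proof -
  define w where "w = (2::nat) ^ multiplicity 2 n"
  have "n \<noteq> 0" and "\<not> is_unit (2::nat)"
    using assms(2) by simp_all
  then obtain m where n: "n = w * m" and "odd m"
    using multiplicity_decompose'[of n 2] unfolding w_def by blast
  have "coprime w m"
    using \<open>odd m\<close> by (simp add: w_def)
  have "typeI_duadic_exists q n s t \<longleftrightarrow> \<not> odd_return (mu q n) (rho s t n) {..<n}"
    using commuting_bijections_mu_rho[OF dvd_refl assms(3,5,7)]
    by (rule typeI_duadic_exists_iff_no_odd_return)
  also have "\<dots> \<longleftrightarrow> \<not> odd_return (mu q w) (rho s t w) {..<w}"
    using odd_return_mod_odd_cofactor[OF \<open>coprime w m\<close> \<open>odd m\<close>] assms(3,5,7)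
    unfolding n by blast
  also have "\<dots> \<longleftrightarrow> typeI_duadic_exists q w s t"
    using commuting_bijections_mu_rho[OF _ assms(3,5,7), of w] n
    by (simp add: typeI_duadic_exists_iff_no_odd_return)
  also have "\<dots> \<longleftrightarrow> typeI_duadic_exists q w (s mod w) (t mod w)"
    by (simp add: typeI_duadic_exists_def rho_mod_params)
  finally show ?thesis
    unfolding w_def .
qed

end
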